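(* For every time $t\in\{0,1,\dots,T-1\}$, every risk-aversion vector $\beta$, and every spot price $p\in\mathbb R$: (i) for every $r\in\mathcal R$, the map $x\mapsto xp+\tilde V_{t,T}(r+x,p\,|\,\beta)$ is convex on $\mathcal X(r)$; (ii) the map $r\mapsto \tilde V_{t,T}(r,p\,|\,\beta)$ is convex on $\mathcal R$; (iii) the map $r\mapsto V_{t,T}(r,p\,|\,\beta)$ is convex on $\mathcal R$. Moreover, $r\mapsto V_{T,T}(r,p\,|\,\beta)$ is convex on $\mathcal R$.
   Context: Model (dynamic EV charging). Fix a horizon $T\in\{1,2,\dots\}$, a battery capacity $R_{\max}>0$, a maximal charge per period $x_{\max}>0$, an initial charge $R_0\in[0,R_{\max}]$, an access fee $c_f\in\mathbb R$, a reference price $p_{\mathrm{ref}}>0$, a constant $\gamma_h\ge 0$, a deterministic seasonality function $g:\mathbb R\to\mathbb R$, and price parameters $\kappa_Y>0$, $\mu_Y\in\mathbb R$, $\sigma_Y>0$, $\lambda_J\in(0,1)$, $\mu_J\in\mathbb R$, $\sigma_J>0$. Spot prices are $P_t=g(t)+Y_t$ with $Y_{t+1}=Y_te^{-\kappa_Y}+\mu_Y(1-e^{-\kappa_Y})+\xi_{t+1}+X_{t+1}J_{t+1}$, where $(\xi_t)$ are i.i.d. $\mathcal N\big(0,\sigma_Y^2(1-e^{-2\kappa_Y})/(2\kappa_Y)\big)$, $(X_t)$ are i.i.d. Bernoulli$(\lambda_J)$, $(J_t)$ are i.i.d. $\mathcal N(\mu_J,\sigma_J^2)$, all mutually independent.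 Define $\psi_{t+1}=g(t+1)-g(t)e^{-\kappa_Y}+\mu_Y(1-e^{-\kappa_Y})+\xi_{t+1}+X_{t+1}J_{t+1}$ and $\psi_{t+1,Y}=\psi_{t+1}-g(t+1)$ (so given $P_t=p$, $P_{t+1}$ has the law of $pe^{-\kappa_Y}+\psi_{t+1}$ and $Y_{t+1}$ that of $pe^{-\kappa_Y}+\psi_{t+1,Y}$). Let $\mathcal R=[0,R_{\max}]$, $\mathcal X(r)=[0,\min\{R_{\max}-r,x_{\max}\}]$, and shortage $h(r)=\min\{R_0+Tx_{\max},R_{\max}\}-r$. Let $\gamma_Y:\mathbb R\to(0,\infty)$ be a compensation function. Risk measures. For $\alpha\in(0,1)$: $\mathrm{VaR}_\alpha(X)=\inf\{u:\mathbf P(X\le u)>\alpha\}$, $\mathrm{CVaR}_\alpha(X)=\inf_u\{u+(1-\alpha)^{-1}\mathbf E[(X-u)^+]\}$. For $\beta_t=(\lambda_t,\alpha_t)\in[0,1]\times(0,1)$, $\rho_{\beta_t}(X)=(1-\lambda_t)\mathbf E[X]+\lambda_t\mathrm{CVaR}_{\alpha_t}(X)$. A risk-aversion vector is $\beta=(\lambda_0,\alpha_0,\dots,\lambda_T,\alpha_T)$. Value functions. For $r\in\mathcal R$, $p\in\mathbb R$: $V_{T,T}(r,p\,|\,\beta)=\rho_{\beta_T}\big[\big(1+\gamma_h h(r)+\gamma_Y(pe^{-\kappa_Y}+\psi_{T+1,Y})\big)h(r)p_{\mathrm{ref}}\big]$, and for $t=T-1,\dots,0$: $\tilde V_{t,T}(r,p\,|\,\beta)=\rho_{\beta_t}\big[V_{t+1,T}(r,pe^{-\kappa_Y}+\psi_{t+1}\,|\,\beta)\big]$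 (post-decision value function) and $V_{t,T}(r,p\,|\,\beta)=\min_{x\in\mathcal X(r)}\{xp-c_f+\tilde V_{t,T}(r+x,p\,|\,\beta)\}$. *)

theory Defs
  imports "HOL-Probability.Probability"
begin

record ev_params =
  Hor   :: nat
  Rmx   :: real
  xmx   :: real
  R0    :: real                (* initial charge *)
  cf    :: real                (* access fee c_f *)
  pref  :: real
  gam_h :: real
  seas  :: "real \<Rightarrow> real"
  kapY  :: real
  muY   :: real
  sigY  :: real
  lamJ  :: real
  muJ   :: real
  sigJ  :: real
  gam_Y :: "real \<Rightarrow> real"     (* compensation function gamma_Y *)

definition params_ok :: "ev_params \<Rightarrow> bool" where
  "params_ok P \<longleftrightarrow> Hor P \<ge> 1 \<and> Rmx P > 0 \<and> xmx P > 0 \<and> 0 \<le> R0 P \<and> R0 P \<le> Rmx P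
     \<and> pref P > 0 \<and> gam_h P \<ge> 0 \<and> kapY P > 0 \<and> sigY P > 0
     \<and> 0 < lamJ P \<and> lamJ P < 1 \<and> sigJ P > 0 \<and> (\<forall>y. gam_Y P y > 0)"

definition xi_sd :: "ev_params \<Rightarrow> real" where
  "xi_sd P = sqrt (sigY P ^ 2 * (1 - exp (-2 * kapY P)) / (2 * kapY P))"

text \<open>Law of the innovation xi + X J, with xi ~ N(0, xi_sd^2), X ~ Bernoulli(lamJ),
  J ~ N(muJ, sigJ^2), mutually independent (product measure).\<close>
definition noise :: "ev_params \<Rightarrow> real measure" where
  "noise P = distr
     (density lborel (normal_density 0 (xi_sd P)) \<Otimes>\<^sub>M
        (measure_pmf (bernoulli_pmf (lamJ P)) \<Otimes>\<^sub>M density lborel (normal_density (muJ P) (sigJ P))))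
     borel (\<lambda>(a, b, j). a + (if b then j else 0))"

text \<open>Deterministic part of psi_{t+1}: psi_{t+1} = shift t + xi_{t+1} + X_{t+1} J_{t+1}.\<close>
definition shift :: "ev_params \<Rightarrow> nat \<Rightarrow> real" where
  "shift P t = seas P (real t + 1) - seas P (real t) * exp (- kapY P) + muY P * (1 - exp (- kapY P))"

definition Rset :: "ev_params \<Rightarrow> real set" where
  "Rset P = {0 .. Rmx P}"

definition Xset :: "ev_params \<Rightarrow> real \<Rightarrow> real set" where
  "Xset P r = {0 .. min (Rmx P - r) (xmx P)}"

definition shortage :: "ev_params \<Rightarrow> real \<Rightarrow> real" where
  "shortage P r = min (R0 P + real (Hor P) * xmx P) (Rmx P) - r"

definition CVaR :: "real \<Rightarrow> 'a measure \<Rightarrow> ('a \<Rightarrow> real) \<Rightarrow> real" where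
  "CVaR \<alpha> M f = (INF u. u + (1 / (1 - \<alpha>)) * (\<integral>z. max (f z - u) 0 \<partial>M))"

definition rho :: "real \<Rightarrow> real \<Rightarrow> 'a measure \<Rightarrow> ('a \<Rightarrow> real) \<Rightarrow> real" where
  "rho lam \<alpha> M f = (1 - lam) * (\<integral>z. f z \<partial>M) + lam * CVaR \<alpha> M f"

definition term_cost :: "ev_params \<Rightarrow> real \<Rightarrow> real \<Rightarrow> real" where
  "term_cost P r y = (1 + gam_h P * shortage P r + gam_Y P y) * shortage P r * pref P"

text \<open>V_{T,T}; Y_{T+1} = p e^{-kappa} + psi_{T+1} - g(T+1).
  The risk aversion vector beta is given by lb t = lambda_t and ab t = alpha_t.\<close>
definition VTT :: "ev_params \<Rightarrow> (nat \<Rightarrow> real) \<Rightarrow> (nat \<Rightarrow> real) \<Rightarrow> real \<Rightarrow> real \<Rightarrow> real" where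
  "VTT P lb ab r p = rho (lb (Hor P)) (ab (Hor P)) (noise P)
     (\<lambda>z. term_cost P r (p * exp (- kapY P) + shift P (Hor P) + z - seas P (real (Hor P) + 1)))"

text \<open>Backward recursion indexed by the number n = T - t of remaining steps.\<close>
primrec Wv :: "ev_params \<Rightarrow> (nat \<Rightarrow> real) \<Rightarrow> (nat \<Rightarrow> real) \<Rightarrow> nat \<Rightarrow> real \<Rightarrow> real \<Rightarrow> real" where
  "Wv P lb ab 0 r p = VTT P lb ab r p"
| "Wv P lb ab (Suc n) r p =
     (let t = Hor P - Suc n in
      INF x \<in> Xset P r. x * p - cf P
        + rho (lb t) (ab t) (noise P) (\<lambda>z. Wv P lb ab n (r + x) (p * exp (- kapY P) + shift P t + z)))"

text \<open>Value function V_{t,T} (meaningful for t \<le> T).\<close>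
definition V :: "ev_params \<Rightarrow> (nat \<Rightarrow> real) \<Rightarrow> (nat \<Rightarrow> real) \<Rightarrow> nat \<Rightarrow> real \<Rightarrow> real \<Rightarrow> real" where
  "V P lb ab t r p = Wv P lb ab (Hor P - t) r p"

text \<open>Post-decision value function tilde V_{t,T} (meaningful for t < T).\<close>
definition Vt :: "ev_params \<Rightarrow> (nat \<Rightarrow> real) \<Rightarrow> (nat \<Rightarrow> real) \<Rightarrow> nat \<Rightarrow> real \<Rightarrow> real \<Rightarrow> real" where
  "Vt P lb ab t r p = rho (lb t) (ab t) (noise P)
     (\<lambda>z. V P lb ab (Suc t) r (p * exp (- kapY P) + shift P t + z))"

end

theory Submission
  imports Defs
begin

text \<open>The risk measure \<open>\<rho> = (1 - \<lambda>) E + \<lambda> CVaR\<^sub>\<alpha>\<close> is monotone and convex, so applied to a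
  family of costs that is pointwise convex in the charge \<open>r\<close> it yields a convex function of \<open>r\<close>.
  The terminal cost is convex in \<open>r\<close>, being a quadratic with nonnegative leading coefficient in
  the affine shortage \<open>h(r)\<close>. The Bellman step minimises a function that is jointly convex in
  \<open>(r, x)\<close> over the convex set \<open>{(r, x). r \<in> R, x \<in> X(r)}\<close>, and such partial minimisation
  preserves convexity.\<close>

lemma convex_on_linear:
  fixes f :: "'a::real_vector \<Rightarrow> real"
  assumes "linear f" and "convex S"
  shows "convex_on S f"
  using assms by (intro convex_onI) (simp_all add: linear_add linear_scale)

lemma convex_on_compose_affine:
  fixes f :: "'b::real_vector \<Rightarrow> real" and L :: "'a::real_vector \<Rightarrow> 'b"
  assumes f: "convex_on S f" and L: "linear L" and T: "convex T"
    and maps: "\<And>x. x \<in> T \<Longrightarrow> c + L x \<in> S"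
  shows "convex_on T (\<lambda>x. f (c + L x))"
proof (rule convex_onI[OF _ T])
  fix t :: real and x y assume t: "0 < t" "t < 1" and xy: "x \<in> T" "y \<in> T"
  have "c + L ((1 - t) *\<^sub>R x + t *\<^sub>R y) = (1 - t) *\<^sub>R (c + L x) + t *\<^sub>R (c + L y)"
    by (simp add: linear_add[OF L] linear_scale[OF L]) (simp add: algebra_simps)
  then show "f (c + L ((1 - t) *\<^sub>R x + t *\<^sub>R y)) \<le> (1 - t) * f (c + L x) + t * f (c + L y)"
    using convex_onD[OF f, of t "c + L x" "c + L y"] t xy maps by simp
qed

lemma convex_on_Icc_bdd_below:
  fixes f :: "real \<Rightarrow> real"
  assumes f: "convex_on {a..b} f"
  shows "bdd_below (f ` {a..b})"
proof (rule bdd_belowI2)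
  fix x assume x: "x \<in> {a..b}"
  have mirror: "a + b - x \<in> {a..b}" using x by auto
  have mid: "(1 - 1/2) *\<^sub>R x + (1/2) *\<^sub>R (a + b - x) = (a + b) / 2"
    by (simp add: field_simps)
  have "f ((1 - 1/2) *\<^sub>R x + (1/2) *\<^sub>R (a + b - x)) \<le> (1 - 1/2) * f x + 1/2 * f (a + b - x)"
    by (rule convex_onD[OF f]) (use x mirror in auto)
  then have "f ((a + b) / 2) \<le> f x / 2 + f (a + b - x) / 2"
    unfolding mid by simp
  moreover have "f (a + b - x) \<le> max (f a) (f b)" by (rule convex_on_le_max[OF f mirror])
  ultimately show "2 * f ((a + b) / 2) - max (f a) (f b) \<le> f x" by simp
qed

lemma le_convex_comb_INF:
  fixes A :: "'a \<Rightarrow> real" and B :: "'b \<Rightarrow> real" and t c :: real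
  assumes ne: "X1 \<noteq> {}" "X2 \<noteq> {}" and t: "0 < t" "t < 1"
    and le: "\<And>a b. a \<in> X1 \<Longrightarrow> b \<in> X2 \<Longrightarrow> c \<le> (1 - t) * A a + t * B b"
  shows "c \<le> (1 - t) * (INF a\<in>X1. A a) + t * (INF b\<in>X2. B b)"
proof -
  have le_INF_A: "c \<le> (1 - t) * (INF a\<in>X1. A a) + t * B b" if b: "b \<in> X2" for b
  proof -
    have "(c - t * B b) / (1 - t) \<le> (INF a\<in>X1. A a)"
    proof (rule cINF_greatest[OF ne(1)])
      fix a assume "a \<in> X1"
      from le[OF this b] t show "(c - t * B b) / (1 - t) \<le> A a"
        by (simp add: divide_simps) (simp add: algebra_simps)
    qed
    with t show ?thesis by (simp add: divide_simps) (simp add: algebra_simps)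
  qed
  have "(c - (1 - t) * (INF a\<in>X1. A a)) / t \<le> (INF b\<in>X2. B b)"
  proof (rule cINF_greatest[OF ne(2)])
    fix b assume "b \<in> X2"
    from le_INF_A[OF this] t show "(c - (1 - t) * (INF a\<in>X1. A a)) / t \<le> B b"
      by (simp add: divide_simps) (simp add: algebra_simps)
  qed
  with t show ?thesis by (simp add: divide_simps) (simp add: algebra_simps)
qed

lemma convex_on_partial_INF:
  fixes F :: "'a::real_vector \<Rightarrow> 'b::real_vector \<Rightarrow> real"
  assumes F: "convex_on (Sigma S X) (\<lambda>(r, x). F r x)"
    and ne: "\<And>r. r \<in> S \<Longrightarrow> X r \<noteq> {}"
    and bdd: "\<And>r. r \<in> S \<Longrightarrow> bdd_below (F r ` X r)"
  shows "convex_on S (\<lambda>r. INF x\<in>X r. F r x)"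
proof (rule convex_onI)
  have "S = fst ` Sigma S X" using ne by force
  then show "convex S"
    using convex_linear_image[OF linear_fst convex_on_imp_convex[OF F]] by simp
next
  fix t :: real and r1 r2 assume t: "0 < t" "t < 1" and r: "r1 \<in> S" "r2 \<in> S"
  let ?r = "(1 - t) *\<^sub>R r1 + t *\<^sub>R r2"
  show "(INF x\<in>X ?r. F ?r x) \<le> (1 - t) * (INF x\<in>X r1. F r1 x) + t * (INF x\<in>X r2. F r2 x)"
  proof (rule le_convex_comb_INF[OF ne[OF r(1)] ne[OF r(2)] t])
    fix x1 x2 assume x: "x1 \<in> X r1" "x2 \<in> X r2"
    let ?x = "(1 - t) *\<^sub>R x1 + t *\<^sub>R x2"
    have comb: "(?r, ?x) = (1 - t) *\<^sub>R (r1, x1) + t *\<^sub>R (r2, x2)" by simp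
    have "(?r, ?x) \<in> Sigma S X"
      unfolding comb by (rule convexD_alt[OF convex_on_imp_convex[OF F]]) (use r x t in auto)
    then have "(INF x\<in>X ?r. F ?r x) \<le> F ?r ?x"
      using bdd by (auto intro: cINF_lower)
    also have "\<dots> \<le> (1 - t) * F r1 x1 + t * F r2 x2"
      using convex_onD[OF F, of t "(r1, x1)" "(r2, x2)"] r x t by simp
    finally show "(INF x\<in>X ?r. F ?r x) \<le> (1 - t) * F r1 x1 + t * F r2 x2" .
  qed
qed

lemma integral_le_CVaR_objective:
  fixes f :: "'a \<Rightarrow> real"
  assumes "prob_space M" and f: "integrable M f" and \<alpha>: "0 \<le> \<alpha>" "\<alpha> < 1"
  shows "(\<integral>z. f z \<partial>M) \<le> u + 1 / (1 - \<alpha>) * (\<integral>z. max (f z - u) 0 \<partial>M)"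
proof -
  interpret prob_space M by fact
  have "(\<integral>z. f z \<partial>M) - u = (\<integral>z. f z - u \<partial>M)"
    using f by (simp add: prob_space)
  also have "\<dots> \<le> (\<integral>z. max (f z - u) 0 \<partial>M)"
    using f by (intro integral_mono) auto
  also have "\<dots> \<le> 1 / (1 - \<alpha>) * (\<integral>z. max (f z - u) 0 \<partial>M)"
  proof -
    have "0 \<le> (\<integral>z. max (f z - u) 0 \<partial>M)" by (intro Bochner_Integration.integral_nonneg) simp
    moreover have "1 \<le> 1 / (1 - \<alpha>)" using \<alpha> by simp
    ultimately show ?thesis using mult_right_mono by fastforce
  qed
  finally show ?thesis by simp
qed

lemma CVaR_le_convex_comb:
  fixes f f1 f2 :: "'a \<Rightarrow> real" and t :: real
  assumes "prob_space M" and \<alpha>: "0 \<le> \<alpha>" "\<alpha> < 1" and t: "0 < t" "t < 1"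
    and f: "integrable M f" and f1: "integrable M f1" and f2: "integrable M f2"
    and le: "\<And>z. f z \<le> (1 - t) * f1 z + t * f2 z"
  shows "CVaR \<alpha> M f \<le> (1 - t) * CVaR \<alpha> M f1 + t * CVaR \<alpha> M f2"
  unfolding CVaR_def
proof (rule le_convex_comb_INF[OF _ _ t])
  interpret prob_space M by fact
  fix u1 u2 :: real
  let ?c = "1 / (1 - \<alpha>)" and ?u = "(1 - t) * u1 + t * u2"
  let ?excess = "\<lambda>g u z. max (g z - u) (0::real)"
  have int_excess: "integrable M (?excess g u)" if "integrable M g" for g u
    using that by (intro integrable_max integrable_diff) auto
  have "bdd_below (range (\<lambda>u. u + ?c * (\<integral>z. ?excess f u z \<partial>M)))"
    using integral_le_CVaR_objective[OF \<open>prob_space M\<close> f \<alpha>] by (intro bdd_belowI2) blast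
  then have "(INF u. u + ?c * (\<integral>z. ?excess f u z \<partial>M)) \<le> ?u + ?c * (\<integral>z. ?excess f ?u z \<partial>M)"
    by (rule cINF_lower) simp
  also have "(\<integral>z. ?excess f ?u z \<partial>M)
      \<le> (\<integral>z. (1 - t) * ?excess f1 u1 z + t * ?excess f2 u2 z \<partial>M)"
  proof (rule integral_mono)
    fix z
    have "f z - ?u \<le> (1 - t) * (f1 z - u1) + t * (f2 z - u2)"
      using le[of z] by (simp add: algebra_simps)
    also have "\<dots> \<le> (1 - t) * ?excess f1 u1 z + t * ?excess f2 u2 z"
      using t by (intro add_mono mult_left_mono) auto
    finally show "?excess f ?u z \<le> (1 - t) * ?excess f1 u1 z + t * ?excess f2 u2 z"
      using t by auto
  qed (use int_excess f f1 f2 in auto)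
  then have "?u + ?c * (\<integral>z. ?excess f ?u z \<partial>M)
      \<le> ?u + ?c * (\<integral>z. (1 - t) * ?excess f1 u1 z + t * ?excess f2 u2 z \<partial>M)"
    using \<alpha> by (intro add_left_mono mult_left_mono) auto
  also have "\<dots> = (1 - t) * (u1 + ?c * (\<integral>z. ?excess f1 u1 z \<partial>M))
      + t * (u2 + ?c * (\<integral>z. ?excess f2 u2 z \<partial>M))"
  proof -
    have "(\<integral>z. (1 - t) * ?excess f1 u1 z + t * ?excess f2 u2 z \<partial>M)
        = (1 - t) * (\<integral>z. ?excess f1 u1 z \<partial>M) + t * (\<integral>z. ?excess f2 u2 z \<partial>M)"
      using int_excess[OF f1] int_excess[OF f2] by simp
    moreover have "\<And>c I1 I2. ?u + c * ((1 - t) * I1 + t * I2) = (1 - t) * (u1 + c * I1) + t * (u2 + c * I2)"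
      by (simp add: algebra_simps)
    ultimately show ?thesis by (simp only:)
  qed
  finally show "(INF u. u + ?c * (\<integral>z. ?excess f u z \<partial>M))
      \<le> (1 - t) * (u1 + ?c * (\<integral>z. ?excess f1 u1 z \<partial>M)) + t * (u2 + ?c * (\<integral>z. ?excess f2 u2 z \<partial>M))" .
qed auto

lemma rho_le_convex_comb:
  fixes f f1 f2 :: "'a \<Rightarrow> real" and t :: real
  assumes "prob_space M" and \<lambda>: "0 \<le> lam" "lam \<le> 1" and \<alpha>: "0 \<le> \<alpha>" "\<alpha> < 1" and t: "0 < t" "t < 1"
    and f: "integrable M f" and f1: "integrable M f1" and f2: "integrable M f2"
    and le: "\<And>z. f z \<le> (1 - t) * f1 z + t * f2 z"
  shows "rho lam \<alpha> M f \<le> (1 - t) * rho lam \<alpha> M f1 + t * rho lam \<alpha> M f2"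
proof -
  have "(\<integral>z. f z \<partial>M) \<le> (\<integral>z. (1 - t) * f1 z + t * f2 z \<partial>M)"
    using f f1 f2 le by (intro integral_mono) auto
  also have "\<dots> = (1 - t) * (\<integral>z. f1 z \<partial>M) + t * (\<integral>z. f2 z \<partial>M)"
    using f1 f2 by simp
  finally have "rho lam \<alpha> M f \<le> (1 - lam) * ((1 - t) * (\<integral>z. f1 z \<partial>M) + t * (\<integral>z. f2 z \<partial>M))
      + lam * ((1 - t) * CVaR \<alpha> M f1 + t * CVaR \<alpha> M f2)"
    unfolding rho_def using \<lambda> CVaR_le_convex_comb[OF assms(1) \<alpha> t f f1 f2 le]
    by (intro add_mono mult_left_mono) auto
  then show ?thesis by (simp add: rho_def algebra_simps)
qed

lemma convex_on_rho:
  fixes F :: "'b::real_vector \<Rightarrow> 'a \<Rightarrow> real"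
  assumes M: "prob_space M" and \<lambda>: "0 \<le> lam" "lam \<le> 1" and \<alpha>: "0 \<le> \<alpha>" "\<alpha> < 1"
    and S: "convex S" and int: "\<And>r. r \<in> S \<Longrightarrow> integrable M (F r)"
    and F: "\<And>z. convex_on S (\<lambda>r. F r z)"
  shows "convex_on S (\<lambda>r. rho lam \<alpha> M (F r))"
proof (rule convex_onI[OF _ S])
  fix t :: real and r1 r2 assume t: "0 < t" "t < 1" and r: "r1 \<in> S" "r2 \<in> S"
  have "(1 - t) *\<^sub>R r1 + t *\<^sub>R r2 \<in> S" using convexD_alt[OF S r] t by simp
  then show "rho lam \<alpha> M (F ((1 - t) *\<^sub>R r1 + t *\<^sub>R r2)) \<le> (1 - t) * rho lam \<alpha> M (F r1) + t * rho lam \<alpha> M (F r2)"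
    using convex_onD[OF F] r t
    by (intro rho_le_convex_comb[OF M \<lambda> \<alpha> t] int) auto
qed

lemma xi_sd_pos:
  assumes "params_ok P"
  shows "0 < xi_sd P"
proof -
  have "0 < kapY P" "0 < sigY P" using assms by (auto simp: params_ok_def)
  then show ?thesis unfolding xi_sd_def by (intro real_sqrt_gt_zero divide_pos_pos mult_pos_pos) auto
qed

lemma prob_space_noise:
  assumes "params_ok P"
  shows "prob_space (noise P)"
  unfolding noise_def
proof (rule prob_space.prob_space_distr)
  show "prob_space (density lborel (normal_density 0 (xi_sd P)) \<Otimes>\<^sub>M
      (measure_pmf (bernoulli_pmf (lamJ P)) \<Otimes>\<^sub>M density lborel (normal_density (muJ P) (sigJ P))))"
    using assms xi_sd_pos[OF assms]
    by (intro prob_space_pair prob_space_measure_pmf prob_space_normal_density) (auto simp: params_ok_def)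
  show "(\<lambda>(a, b, j). a + (if b then j else 0)) \<in> borel_measurable
      (density lborel (normal_density 0 (xi_sd P)) \<Otimes>\<^sub>M
        (measure_pmf (bernoulli_pmf (lamJ P)) \<Otimes>\<^sub>M density lborel (normal_density (muJ P) (sigJ P))))"
    by (simp add: split_beta) measurable
qed

lemma convex_Rset [simp]: "convex (Rset P)"
  by (simp add: Rset_def)

lemma convex_Xset [simp]: "convex (Xset P r)"
  by (simp add: Xset_def)

lemma add_mem_Rset: "r \<in> Rset P \<Longrightarrow> x \<in> Xset P r \<Longrightarrow> r + x \<in> Rset P"
  by (auto simp: Rset_def Xset_def)

lemma zero_mem_Xset: "params_ok P \<Longrightarrow> r \<in> Rset P \<Longrightarrow> 0 \<in> Xset P r"
  by (auto simp: Rset_def Xset_def params_ok_def)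

lemma convex_charging_graph: "convex (Sigma (Rset P) (Xset P))"
proof (rule convexI)
  fix z1 z2 :: "real \<times> real" and u v :: real
  assume z: "z1 \<in> Sigma (Rset P) (Xset P)" "z2 \<in> Sigma (Rset P) (Xset P)"
    and uv: "0 \<le> u" "0 \<le> v" "u + v = 1"
  obtain r1 x1 r2 x2 where z_eq: "z1 = (r1, x1)" "z2 = (r2, x2)" by fastforce
  have bounds: "0 \<le> r1" "0 \<le> r2" "0 \<le> x1" "0 \<le> x2" "r1 + x1 \<le> Rmx P" "r2 + x2 \<le> Rmx P"
      "x1 \<le> xmx P" "x2 \<le> xmx P"
    using z by (auto simp: z_eq Rset_def Xset_def)
  have "u * r1 + v * r2 \<le> u * Rmx P + v * Rmx P"
    "u * (r1 + x1) + v * (r2 + x2) \<le> u * Rmx P + v * Rmx P"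
    "u * x1 + v * x2 \<le> u * xmx P + v * xmx P"
    using bounds uv by (intro add_mono mult_left_mono; simp)+
  then show "u *\<^sub>R z1 + v *\<^sub>R z2 \<in> Sigma (Rset P) (Xset P)"
    using bounds uv by (auto simp: z_eq Rset_def Xset_def algebra_simps simp flip: distrib_right)
qed

lemma convex_on_term_cost:
  assumes "params_ok P"
  shows "convex_on (Rset P) (\<lambda>r. term_cost P r y)"
proof -
  define c where "c = min (R0 P + real (Hor P) * xmx P) (Rmx P)"
  define a where "a = (1 + gam_Y P y) * pref P"
  define b where "b = gam_h P * pref P"
  have cost: "term_cost P r y = a * (c + - r) + b * (c + - r)\<^sup>2" for r
    by (simp add: term_cost_def shortage_def a_def b_def c_def power2_eq_square algebra_simps)
  have "0 \<le> b" using assms by (simp add: b_def params_ok_def)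
  then have "convex_on UNIV (\<lambda>h. a * h + b * h\<^sup>2)"
    by (intro convex_on_add convex_on_linear convex_on_cmul convex_power2 linear_cmul linear_ident) auto
  then have "convex_on (Rset P) (\<lambda>r. a * (c + - r) + b * (c + - r)\<^sup>2)"
    by (rule convex_on_compose_affine[where f = "\<lambda>h. a * h + b * h\<^sup>2"]) (auto intro: linear_uminus)
  then show ?thesis by (simp only: cost)
qed

lemma convex_on_decision_cost:
  assumes H: "convex_on (Rset P) H" and r: "r \<in> Rset P"
  shows "convex_on (Xset P r) (\<lambda>x. x * p + H (r + x))"
proof (rule convex_on_add)
  show "convex_on (Xset P r) (\<lambda>x. x * p)"
    by (intro convex_on_linear linearI) (simp_all add: algebra_simps)
  show "convex_on (Xset P r) (\<lambda>x. H (r + x))"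
    using convex_on_compose_affine[OF H linear_ident convex_Xset add_mem_Rset[OF r]] .
qed

lemma convex_on_Bellman_INF:
  assumes P: "params_ok P" and H: "convex_on (Rset P) H"
  shows "convex_on (Rset P) (\<lambda>r. INF x\<in>Xset P r. x * p - c + H (r + x))"
proof (rule convex_on_partial_INF)
  have "linear (\<lambda>z :: real \<times> real. fst z + snd z)" "linear (\<lambda>z :: real \<times> real. snd z * p)"
    by (auto intro!: linearI simp: algebra_simps)
  then have "convex_on (Sigma (Rset P) (Xset P)) (\<lambda>z. (snd z * p + - c) + H (0 + (fst z + snd z)))"
    using add_mem_Rset
    by (intro convex_on_add convex_on_linear convex_on_const[THEN iffD2] convex_charging_graph
        convex_on_compose_affine[OF H]) auto
  then show "convex_on (Sigma (Rset P) (Xset P)) (\<lambda>(r, x). x * p - c + H (r + x))"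
    by (simp add: case_prod_unfold)
next
  fix r assume r: "r \<in> Rset P"
  show "Xset P r \<noteq> {}" using zero_mem_Xset[OF P r] by blast
  have "convex_on (Xset P r) (\<lambda>x. (x * p + H (r + x)) + - c)"
    by (intro convex_on_add convex_on_decision_cost[OF H r] convex_on_const[THEN iffD2] convex_Xset)
  then show "bdd_below ((\<lambda>x. x * p - c + H (r + x)) ` Xset P r)"
    unfolding Xset_def by (auto intro: convex_on_Icc_bdd_below simp: algebra_simps)
qed

lemma V_eq_INF_Vt:
  assumes "t < Hor P"
  shows "V P lb ab t r p = (INF x\<in>Xset P r. x * p - cf P + Vt P lb ab t (r + x) p)"
proof -
  have "Hor P - t = Suc (Hor P - Suc t)" "Hor P - Suc (Hor P - Suc t) = t" using assms by auto
  then show ?thesis by (simp add: V_def Vt_def Let_def)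
qed

theorem proposition1:
  fixes P :: ev_params and lb ab :: "nat \<Rightarrow> real" and p :: real
  assumes params: "params_ok P"
    and risk: "\<forall>t \<le> Hor P. 0 \<le> lb t \<and> lb t \<le> 1 \<and> 0 < ab t \<and> ab t < 1"
    and wellposed_T: "\<forall>r \<in> Rset P. \<forall>q. integrable (noise P)
        (\<lambda>z. term_cost P r (q * exp (- kapY P) + shift P (Hor P) + z - seas P (real (Hor P) + 1)))"
    and wellposed: "\<forall>t < Hor P. \<forall>r \<in> Rset P. \<forall>q. integrable (noise P)
        (\<lambda>z. V P lb ab (Suc t) r (q * exp (- kapY P) + shift P t + z))"
  shows "(\<forall>t < Hor P.
            (\<forall>r \<in> Rset P. convex_on (Xset P r) (\<lambda>x. x * p + Vt P lb ab t (r + x) p))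
          \<and> convex_on (Rset P) (\<lambda>r. Vt P lb ab t r p)
          \<and> convex_on (Rset P) (\<lambda>r. V P lb ab t r p))
       \<and> convex_on (Rset P) (\<lambda>r. V P lb ab (Hor P) r p)"
proof -
  note M = prob_space_noise[OF params]
  have lb: "0 \<le> lb t" "lb t \<le> 1" and ab: "0 \<le> ab t" "ab t < 1" if "t \<le> Hor P" for t
    using risk that by auto
  have V_terminal: "convex_on (Rset P) (\<lambda>r. V P lb ab (Hor P) r q)" for q
    unfolding V_def Wv.simps VTT_def diff_self_eq_0
    using wellposed_T convex_on_term_cost[OF params]
    by (intro convex_on_rho[OF M lb ab convex_Rset]) auto
  have Vt: "convex_on (Rset P) (\<lambda>r. Vt P lb ab t r q)"
    if "t < Hor P" and "\<And>q. convex_on (Rset P) (\<lambda>r. V P lb ab (Suc t) r q)" for t q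
    unfolding Vt_def using that wellposed
    by (intro convex_on_rho[OF M lb ab convex_Rset]) auto
  have V: "convex_on (Rset P) (\<lambda>r. V P lb ab t r q)" if "t \<le> Hor P" for t q
    using that
  proof (induction t arbitrary: q rule: inc_induct)
    case base show ?case by (rule V_terminal)
  next
    case (step t) then show ?case
      by (simp only: V_eq_INF_Vt) (intro convex_on_Bellman_INF[OF params] Vt)
  qed
  have Vt_all: "convex_on (Rset P) (\<lambda>r. Vt P lb ab t r q)" if "t < Hor P" for t q
    using that V by (intro Vt) auto
  show ?thesis
    using convex_on_decision_cost[OF Vt_all] Vt_all V V_terminal by auto
qed

end
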